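(* Let $R$ be an exchange ring and $\alpha=[a_1\ a_2\ \cdots\ a_n]$ a right unimodular row over $R$ (i.e. $a_1R+\cdots+a_nR=R$). Then $\alpha$ can be transformed by a finite sequence of elementary column operations to a row $[b_1\ b_2\ \cdots\ b_n]$ such that $R=b_1R\oplus\cdots\oplus b_nR$ and $b_i\in a_iRa_i$ for each $i$.
   Context: All rings are unital. A ring $R$ is an exchange ring if for every $a\in R$ there is an idempotent $e\in aR$ with $1-e\in(1-a)R$ (equivalently, $R_R$ has the finite exchange property). An elementary column operation on a row $[c_1\ \cdots\ c_n]$ replaces some entry $c_i$ by $c_i+c_jr$ for some $j\neq i$ and $r\in R$ (right multiplication of the $1\times n$ matrix by a transvection $I+re_{ji}$). *)

theory Defs
  imports Main
begin

definition exchange_ring :: "'a::ring_1 itself \<Rightarrow> bool" where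
  "exchange_ring _ \<longleftrightarrow>
     (\<forall>a::'a. \<exists>e. e * e = e \<and> (\<exists>r. e = a * r) \<and> (\<exists>s. 1 - e = (1 - a) * s))"

definition right_unimodular :: "'a::ring_1 list \<Rightarrow> bool" where
  "right_unimodular c \<longleftrightarrow>
     (\<forall>y::'a. \<exists>x::nat \<Rightarrow> 'a. (\<Sum>i<length c. c ! i * x i) = y)"

definition elem_col_op :: "'a::ring_1 list \<Rightarrow> 'a list \<Rightarrow> bool" where
  "elem_col_op c d \<longleftrightarrow>
     (\<exists>i j r. i < length c \<and> j < length c \<and> j \<noteq> i \<and> d = c[i := c ! i + c ! j * r])"

definition right_direct_sum_decomp :: "'a::ring_1 list \<Rightarrow> bool" where
  "right_direct_sum_decomp b \<longleftrightarrow>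
     (\<forall>y::'a. \<exists>x::nat \<Rightarrow> 'a. (\<Sum>i<length b. b ! i * x i) = y) \<and>
     (\<forall>z::nat \<Rightarrow> 'a. (\<forall>i<length b. \<exists>x. z i = b ! i * x) \<longrightarrow>
         (\<Sum>i<length b. z i) = 0 \<longrightarrow> (\<forall>i<length b. z i = 0))"

end

theory Submission
  imports Defs
begin

text \<open>From a_1 x_1 + ... + a_n x_n = 1 an exchange ring yields pairwise orthogonal
idempotents e_i \<in> a_i R with e_1 + ... + e_n = 1. More generally, for an idempotent
g = c_1 z_1 + ... + c_n z_n with all c_i \<in> gR, induction on n: the exchange property of the
corner ring gRg splits g into orthogonal idempotents f + k with k \<in> c_n R and f in
c_1 R + ... + c_{n-1} R, and the idempotents h_i = f t_i obtained for f give orthogonal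
idempotents t_i h_i \<in> c_i R, completed by g - \<Sigma> t_i h_i \<in> k R.

Writing e_i = a_i u_i, the column operation a_i \<mapsto> a_i - \<Sigma>_{j \<noteq> i} a_j u_j a_i turns a_i
into (1 - \<Sigma>_{j \<noteq> i} e_j) a_i = a_i u_i a_i, and the resulting row b_i = e_i a_i
satisfies b_i R = e_i R, whence R = b_1 R \<oplus> ... \<oplus> b_n R.\<close>

definition orthogonal_idempotents :: "nat \<Rightarrow> (nat \<Rightarrow> 'a::ring_1) \<Rightarrow> bool" where
  "orthogonal_idempotents n e \<longleftrightarrow>
     (\<forall>i<n. \<forall>j<n. e i * e j = (if i = j then e i else 0))"

lemma orthogonal_idempotents_mult_sum:
  assumes "orthogonal_idempotents n e" "i < n"
  shows "e i * (\<Sum>j<n. e j) = e i"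
proof -
  have "e i * (\<Sum>j<n. e j) = (\<Sum>j<n. if i = j then e i else 0)"
    using assms unfolding orthogonal_idempotents_def by (simp add: sum_distrib_left)
  then show ?thesis using assms(2) by simp
qed

lemma orthogonal_idempotents_sum_mult:
  assumes "orthogonal_idempotents n e" "i < n"
  shows "(\<Sum>j<n. e j) * e i = e i"
proof -
  have "(\<Sum>j<n. e j) * e i = (\<Sum>j<n. if j = i then e i else 0)"
    using assms unfolding orthogonal_idempotents_def by (simp add: sum_distrib_right)
  then show ?thesis using assms(2) by simp
qed

lemma orthogonal_idempotents_sum_idem:
  assumes "orthogonal_idempotents n e"
  shows "(\<Sum>j<n. e j) * (\<Sum>j<n. e j) = (\<Sum>j<n. e j)"
  using orthogonal_idempotents_mult_sum[OF assms] by (simp add: sum_distrib_right)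

lemma orthogonal_idempotents_complete:
  fixes g :: "'a::ring_1"
  assumes orth: "orthogonal_idempotents n e" and "g * g = g"
    and corner: "\<And>i. i < n \<Longrightarrow> g * e i = e i \<and> e i * g = e i"
  defines "S \<equiv> \<Sum>j<n. e j"
  shows "orthogonal_idempotents (Suc n) (e(n := g - S))"
    and "(\<Sum>j<Suc n. (e(n := g - S)) j) = g"
proof -
  have "g * S = S" "S * g = S"
    using corner unfolding S_def by (simp_all add: sum_distrib_left sum_distrib_right)
  then have "(g - S) * (g - S) = g - S"
    using \<open>g * g = g\<close> orthogonal_idempotents_sum_idem[OF orth] unfolding S_def
    by (simp add: algebra_simps)
  moreover have "e i * (g - S) = 0" "(g - S) * e i = 0" if "i < n" for i
    using corner[OF that] orthogonal_idempotents_mult_sum[OF orth that]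
      orthogonal_idempotents_sum_mult[OF orth that] unfolding S_def by (simp_all add: algebra_simps)
  ultimately show "orthogonal_idempotents (Suc n) (e(n := g - S))"
    using orth unfolding orthogonal_idempotents_def by (auto simp: less_Suc_eq)
  show "(\<Sum>j<Suc n. (e(n := g - S)) j) = g" unfolding S_def by simp
qed

lemma orthogonal_idempotents_transfer:
  assumes orth: "orthogonal_idempotents n h" and ht: "\<And>i. i < n \<Longrightarrow> (\<Sum>j<n. h j) * t i = h i"
  shows "orthogonal_idempotents n (\<lambda>i. t i * h i)"
  unfolding orthogonal_idempotents_def
proof (intro allI impI)
  fix i j assume ij: "i < n" "j < n"
  have "h i * t j = h i * (\<Sum>k<n. h k) * t j"
    using orthogonal_idempotents_mult_sum[OF orth ij(1)] by simp
  also have "\<dots> = h i * h j" using ht[OF ij(2)] by (simp add: mult.assoc)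
  finally have "t i * h i * (t j * h j) = t i * (h i * h j * h j)" by (metis mult.assoc)
  then show "t i * h i * (t j * h j) = (if i = j then t i * h i else 0)"
    using orth ij unfolding orthogonal_idempotents_def by auto
qed

lemma exchange_ring_corner:
  fixes g u :: "'a::ring_1"
  assumes ex: "exchange_ring TYPE('a)" and gg: "g * g = g" and gu: "g * u = u" and ug: "u * g = u"
  obtains k r s where "k * k = k" "g * k = k" "k * g = k" "k = u * r" "g - k = (g - u) * s"
proof -
  \<comment> \<open>Exchange for u + (1 - g); as 1 - e then lies in gR, k = e g lies in gRg.\<close>
  obtain e r s where ee: "e * e = e" and er: "e = (u + (1 - g)) * r"
    and es': "1 - e = (1 - (u + (1 - g))) * s"
    using ex unfolding exchange_ring_def by blast
  have es: "1 - e = (g - u) * s" using es' by simp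
  have "g * (g - u) = g - u" using gg gu by (simp add: algebra_simps)
  then have "g * ((g - u) * s) = (g - u) * s" by (metis mult.assoc)
  then have "g * (1 - e) = 1 - e" unfolding es .
  then have "(1 - g) * e = 1 - g" by (simp add: algebra_simps)
  then have "(1 - g) * e * g = (1 - g) * g" by simp
  then have geg: "g * e * g = e * g" using gg by (simp add: algebra_simps)
  have "g * e = (g * u + g - g * g) * r" unfolding er by (simp add: algebra_simps)
  then have ge: "g * e = u * r" using gg gu by simp
  show thesis
  proof
    show "e * g * (e * g) = e * g" by (metis ee geg mult.assoc)
    show "g * (e * g) = e * g" by (metis geg mult.assoc)
    show "e * g * g = e * g" using gg by (simp add: mult.assoc)
    show "e * g = u * (r * g)" using ge geg by (metis mult.assoc)
    have "g - e * g = (1 - e) * g" by (simp add: algebra_simps)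
    then show "g - e * g = (g - u) * (s * g)" unfolding es by (simp add: mult.assoc)
  qed
qed

lemma exchange_ring_split_last:
  fixes g :: "'a::ring_1"
  assumes ex: "exchange_ring TYPE('a)" and gg: "g * g = g"
    and gc: "\<forall>i<Suc n. g * c i = c i" and gz: "(\<Sum>i<Suc n. c i * z i) = g"
  obtains f k y where "f * f = f" "f * k = 0" "g = f + k" "\<exists>w. k = c n * w"
    "f = (\<Sum>i<n. c i * y i)"
proof -
  define u where "u = c n * z n * g"
  have gu: "g * u = u" unfolding u_def using gc by (simp add: mult.assoc[symmetric])
  have ug: "u * g = u" unfolding u_def using gg by (simp add: mult.assoc)
  have "g = (\<Sum>i<Suc n. c i * z i) * g" using gz gg by simp
  then have gmu: "g - u = (\<Sum>i<n. c i * z i) * g" unfolding u_def by (simp add: algebra_simps)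
  obtain k r s where kk: "k * k = k" and gk: "g * k = k" and kg: "k * g = k"
    and kr: "k = u * r" and ks: "g - k = (g - u) * s"
    using exchange_ring_corner[OF ex gg gu ug] by blast
  show thesis
  proof
    show "(g - k) * (g - k) = g - k" using gg gk kg kk by (simp add: algebra_simps)
    show "(g - k) * k = 0" using gk kk by (simp add: algebra_simps)
    show "g = (g - k) + k" by simp
    show "\<exists>w. k = c n * w" unfolding kr u_def by (auto simp: mult.assoc)
    show "g - k = (\<Sum>i<n. c i * (z i * g * s))"
      unfolding ks gmu by (simp add: sum_distrib_right mult.assoc)
  qed
qed

lemma exchange_ring_orthogonal_idempotents:
  fixes g :: "'a::ring_1"
  assumes ex: "exchange_ring TYPE('a)"
  shows "g * g = g \<Longrightarrow> \<forall>i<n. g * c i = c i \<Longrightarrow> (\<Sum>i<n. c i * z i) = g \<Longrightarrow>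
    \<exists>e. orthogonal_idempotents n e \<and> (\<forall>i<n. \<exists>w. e i = c i * w) \<and> (\<Sum>i<n. e i) = g"
proof (induction n arbitrary: g c z)
  case 0
  then show ?case by (simp add: orthogonal_idempotents_def)
next
  case (Suc n)
  note gg = Suc.prems(1) and gc = Suc.prems(2)
  obtain f k y where ff: "f * f = f" and fk: "f * k = 0" and gfk: "g = f + k"
    and kc: "\<exists>w. k = c n * w" and fy: "f = (\<Sum>i<n. c i * y i)"
    using exchange_ring_split_last[OF ex Suc.prems] by blast
  have "\<forall>i<n. f * (f * c i) = f * c i" using ff by (simp add: mult.assoc[symmetric])
  moreover have "(\<Sum>i<n. f * c i * (y i * f)) = f * (\<Sum>i<n. c i * y i) * f"
    by (simp add: sum_distrib_left sum_distrib_right mult.assoc)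
  then have "(\<Sum>i<n. f * c i * (y i * f)) = f" using ff fy by simp
  ultimately obtain h where orth: "orthogonal_idempotents n h"
    and hc: "\<forall>i<n. \<exists>w. h i = f * c i * w" and hf: "(\<Sum>i<n. h i) = f"
    using Suc.IH[OF ff, of "\<lambda>i. f * c i" "\<lambda>i. y i * f"] by blast
  obtain w where w: "\<forall>i<n. h i = f * c i * w i" using hc by metis
  define t where "t i = c i * w i" for i
  have ft: "f * t i = h i" if "i < n" for i using w that unfolding t_def by (simp add: mult.assoc)
  have gt: "g * t i = t i" if "i < n" for i
    using gc that unfolding t_def by (simp add: mult.assoc[symmetric])
  have hg: "h i * g = h i" if "i < n" for i
  proof -
    have "h i * f = h i" using orthogonal_idempotents_mult_sum[OF orth that] hf by simp
    then show ?thesis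
      using fk unfolding gfk by (metis distrib_left mult.assoc mult_zero_right add_0_right)
  qed
  define S where "S = (\<Sum>i<n. t i * h i)"
  define e where "e = (\<lambda>i. t i * h i)(n := g - S)"
  have orth': "orthogonal_idempotents n (\<lambda>i. t i * h i)"
    using orthogonal_idempotents_transfer[OF orth] ft hf by simp
  have "g * (t i * h i) = t i * h i \<and> t i * h i * g = t i * h i" if "i < n" for i
    using gt[OF that] hg[OF that] by (metis mult.assoc)
  then have "orthogonal_idempotents (Suc n) e" "(\<Sum>i<Suc n. e i) = g"
    using orthogonal_idempotents_complete[OF orth' gg] unfolding e_def S_def by simp_all
  moreover have "\<exists>w. e n = c n * w"
  proof -
    have th_split: "t i * h i = k * (t i * h i) + h i" if "i < n" for i
      using gt[OF that] ft[OF that] orth that unfolding gfk orthogonal_idempotents_def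
      by (metis distrib_right mult.assoc add.commute)
    have "S = (\<Sum>i<n. k * (t i * h i) + h i)"
      unfolding S_def using th_split by (auto intro: sum.cong)
    also have "\<dots> = k * S + f"
      unfolding S_def hf[symmetric] by (simp add: sum.distrib sum_distrib_left)
    finally have "S = k * S + f" .
    then have "e n = k * (1 - S)" unfolding e_def gfk by (simp add: algebra_simps)
    then show ?thesis using kc by (metis mult.assoc)
  qed
  moreover have "\<forall>i<n. \<exists>w. e i = c i * w" unfolding e_def t_def by (auto simp: mult.assoc)
  ultimately show ?case by (auto simp: less_Suc_eq)
qed

lemma elem_col_op_add_sum:
  fixes c :: "'a::ring_1 list"
  assumes "finite J" "i < length c" "J \<subseteq> {..<length c} - {i}"
  shows "elem_col_op\<^sup>*\<^sup>* c (c[i := c ! i + (\<Sum>j\<in>J. c ! j * r j)])"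
  using assms
proof (induction J rule: finite_induct)
  case empty
  then show ?case by simp
next
  case (insert j J)
  let ?d = "c[i := c ! i + (\<Sum>j\<in>J. c ! j * r j)]"
  have "j \<noteq> i" "j < length c" using insert.prems by auto
  then have "elem_col_op ?d (?d[i := ?d ! i + ?d ! j * r j])"
    unfolding elem_col_op_def using insert.prems
    by (intro exI[of _ i] exI[of _ j] exI[of _ "r j"]) simp
  moreover have
    "?d[i := ?d ! i + ?d ! j * r j] = c[i := c ! i + (\<Sum>j\<in>insert j J. c ! j * r j)]"
    using \<open>j \<noteq> i\<close> insert.hyps insert.prems by (simp add: algebra_simps)
  ultimately show ?case using insert by (metis rtranclp.rtrancl_into_rtrancl insert_subset)
qed

lemma elem_col_op_entry_to_corner:
  fixes c :: "'a::ring_1 list"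
  assumes unimod: "(\<Sum>j<length c. c ! j * u j) = 1" and i: "i < length c"
  shows "elem_col_op\<^sup>*\<^sup>* c (c[i := c ! i * u i * c ! i])"
proof -
  let ?J = "{..<length c} - {i}"
  have "(\<Sum>j\<in>?J. c ! j * u j) = 1 - c ! i * u i" using unimod i by (simp add: sum_diff1)
  moreover have "(\<Sum>j\<in>?J. c ! j * - (u j * c ! i)) = - ((\<Sum>j\<in>?J. c ! j * u j) * c ! i)"
    by (simp add: sum_negf sum_distrib_right mult.assoc)
  ultimately have
    "c ! i + (\<Sum>j\<in>?J. c ! j * - (u j * c ! i)) = c ! i - (1 - c ! i * u i) * c ! i"
    by simp
  also have "\<dots> = c ! i * u i * c ! i" by (simp add: algebra_simps)
  finally have "c ! i + (\<Sum>j\<in>?J. c ! j * - (u j * c ! i)) = c ! i * u i * c ! i" .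
  then show ?thesis using elem_col_op_add_sum[of ?J i c "\<lambda>j. - (u j * c ! i)"] i by simp
qed

lemma elem_col_ops_to_corners:
  fixes a :: "'a::ring_1 list"
  assumes unimod: "(\<Sum>i<length a. a ! i * u i) = 1"
    and idem: "\<forall>i<length a. a ! i * u i * (a ! i * u i) = a ! i * u i"
  shows "elem_col_op\<^sup>*\<^sup>* a (map (\<lambda>i. a ! i * u i * a ! i) [0..<length a])"
proof -
  define row where
    "row m = map (\<lambda>i. if i < m then a ! i * u i * a ! i else a ! i) [0..<length a]" for m
  have "elem_col_op\<^sup>*\<^sup>* a (row m)" if "m \<le> length a" for m
    using that
  proof (induction m)
    case 0
    then show ?case by (simp add: row_def map_nth)
  next
    case (Suc m)
    have "row m ! j * u j = a ! j * u j" if "j < length a" for j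
      using that idem unfolding row_def by (simp add: mult.assoc)
    then have "(\<Sum>j<length (row m). row m ! j * u j) = 1" using unimod by (simp add: row_def)
    then have "elem_col_op\<^sup>*\<^sup>* (row m) ((row m)[m := row m ! m * u m * row m ! m])"
      using Suc.prems by (intro elem_col_op_entry_to_corner) (simp_all add: row_def)
    moreover have "(row m)[m := row m ! m * u m * row m ! m] = row (Suc m)"
      using Suc.prems unfolding row_def by (intro nth_equalityI) (auto simp: nth_list_update)
    ultimately show ?case using Suc by (metis Suc_leD rtranclp_trans)
  qed
  moreover have "row (length a) = map (\<lambda>i. a ! i * u i * a ! i) [0..<length a]"
    unfolding row_def by (rule map_cong) auto
  ultimately show ?thesis by (metis order_refl)
qed

lemma right_direct_sum_decomp_orthogonal_idempotents:
  fixes b :: "'a::ring_1 list"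
  assumes orth: "orthogonal_idempotents (length b) e" and sum: "(\<Sum>i<length b. e i) = 1"
    and eb: "\<forall>i<length b. e i * b ! i = b ! i" and be: "\<forall>i<length b. b ! i * u i = e i"
  shows "right_direct_sum_decomp b"
  unfolding right_direct_sum_decomp_def
proof (intro conjI allI impI)
  fix y :: 'a
  have "(\<Sum>i<length b. b ! i * (u i * y)) = (\<Sum>i<length b. e i) * y"
    using be by (simp add: sum_distrib_right mult.assoc[symmetric])
  then show "\<exists>x. (\<Sum>i<length b. b ! i * x i) = y" using sum by auto
next
  fix z :: "nat \<Rightarrow> 'a" and j
  assume zb: "\<forall>i<length b. \<exists>x. z i = b ! i * x" and z0: "(\<Sum>i<length b. z i) = 0"
    and j: "j < length b"
  have ez: "e j * z i = (if j = i then z i else 0)" if i: "i < length b" for i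
  proof -
    obtain x where zx: "z i = b ! i * x" using zb i by blast
    then have "e j * z i = e j * e i * b ! i * x" using eb i by (simp add: mult.assoc)
    then show ?thesis using orth i j zx eb unfolding orthogonal_idempotents_def by auto
  qed
  have "0 = (\<Sum>i<length b. e j * z i)" using z0 by (simp add: sum_distrib_left[symmetric])
  also have "\<dots> = z j" using ez j by simp
  finally show "z j = 0" by simp
qed

theorem lemma2p4:
  fixes a :: "'a::ring_1 list"
  assumes "exchange_ring TYPE('a)"
    and "right_unimodular a"
  shows "\<exists>b. elem_col_op\<^sup>*\<^sup>* a b \<and> right_direct_sum_decomp b \<and>
             (\<forall>i<length a. \<exists>r. b ! i = a ! i * r * a ! i)"
proof -
  obtain x where "(\<Sum>i<length a. a ! i * x i) = 1"
    using assms(2) unfolding right_unimodular_def by blast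
  then obtain e where orth: "orthogonal_idempotents (length a) e"
    and ea: "\<forall>i<length a. \<exists>w. e i = a ! i * w" and sum: "(\<Sum>i<length a. e i) = 1"
    using exchange_ring_orthogonal_idempotents[OF assms(1), of 1 "length a" "\<lambda>i. a ! i" x]
    by auto
  obtain u where u: "\<forall>i<length a. e i = a ! i * u i" using ea by metis
  have idem: "\<forall>i<length a. e i * e i = e i" using orth unfolding orthogonal_idempotents_def by simp
  define b where "b = map (\<lambda>i. a ! i * u i * a ! i) [0..<length a]"
  have "elem_col_op\<^sup>*\<^sup>* a b"
    unfolding b_def using u idem sum by (intro elem_col_ops_to_corners) simp_all
  moreover have "right_direct_sum_decomp b"
    using orth sum u idem unfolding b_def
    by (intro right_direct_sum_decomp_orthogonal_idempotents[where e = e and u = u])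
      (simp_all add: mult.assoc[symmetric])
  moreover have "\<forall>i<length a. \<exists>r. b ! i = a ! i * r * a ! i" unfolding b_def by auto
  ultimately show ?thesis by blast
qed

end
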